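(* Let $G$ be a finite simple graph with a perfect matching $M$, let $\mathcal{C}$ be an optimal edge $2$-colouring of $G$, and let $\mathcal{F}$, $P$ and the sets $P_j$ ($j\in\mathcal{C}_M$) be as in the context. If $(u,v)\in P_i$ and $(z,w)\in P_j$ for some distinct $i,j\in\mathcal{C}_M$, then the paths $u\mathcal{F}v$ and $z\mathcal{F}w$ do not share an internal vertex.
   Context: $G\setminus M$ is the spanning subgraph with edge set $E(G)\setminus M$, with connected components $C_1,\dots,C_h$. An edge $2$-colouring assigns colours to edges (not necessarily properly) so that each vertex sees at most $2$ distinct colours; optimal means maximum number of colours. $\mathrm{mcl}(u)$ is the colour of the $M$-edge at $u$; $\mathcal{C}_M$ is the set of colours used on $M$ and $\mathcal{C}_N$ the other colours. For a colour $i$, $G[i]$ is the subgraph spanned by edges of colour $i$; for $i\in\mathcal{C}_N$ it is a non-matching colour component, and $k_m$ is the number of non-matching colour components contained in $C_m$. Forests: rooted trees, $r(F)$ roots, $l(F)$ leaves (non-root vertices with no children); each tree has a depth-first indexing $\mathrm{dfs}_T$ (descendants get larger indices) and order $u\preceq_T v$ iff $\mathrm{dfs}_T(u)\ge\mathrm{dfs}_T(v)$; vertices of different trees of a forest are incomparable. $(T_1,T_2)$ is a cascading pair if they are vertex-disjoint or $r(T_2)\in l(T_1)$ and $|V(T_1)\cap V(T_2)|=1$; $\mathcal{F}=\{F_1,\dots,F_l\}$ is a cascading sequence of forests if $V(F_i)\cap V(F_j)=\emptyset$ for $|i-j|\ge2$ and every tree of $F_i$ with every tree of $F_{i+1}$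 forms a cascading pair. $V(\mathcal{F})=\bigcup_F V(F)$; $\mathrm{Int}(\mathcal{F})$ is the set of vertices that are neither a root nor a leaf of some $F\in\mathcal{F}$ containing them. $\preceq_{\mathcal{F}}$ is the transitive closure of "$x\preceq_F y$ for some $F\in\mathcal{F}$"; $x\mathcal{F}y$ is the path $xFy$ in the forest $F\in\mathcal{F}$ containing an $x$–$y$ path; internal vertices of a path are those other than its endpoints. Standing data: $\mathcal{F}$ is a cascading sequence of forests in $G\setminus M$ with $\sum_F|l(F)|=\sum_{m=1}^h(k_m-1)$, $\mathrm{Int}(\mathcal{F})\cap V(H)=\emptyset$ for every non-matching colour component $H$, and for each $F\in\mathcal{F}$, $u\in r(F)\cup l(F)$, every edge of $F$ at $u$ has colour $\mathrm{mcl}(u)$. $P=\{(u_i,v_i)\}$ is a set of $\sum_m(k_m-1)$ pairs of vertices of $V(\mathcal{F})$ with: (a) the $u_i$ pairwise distinct; (b) $u_i\prec_{\mathcal{F}}v_i$ and $u_i\mathcal{F}v_i$ exists; (c) $\mathrm{mcl}(u_i)=\mathrm{mcl}(v_i)$; (d) $u_i\mathcal{F}v_i$ monochromatic of colour $\mathrm{mcl}(u_i)$; (e) every internal vertex $z$ of $u_i\mathcal{F}v_i$ has $\mathrm{mcl}(z)\ne\mathrm{mcl}(u_i)$; (f) for $i\ne j$ with $u_iv_i,u_jv_j\in M$, the paths $u_i\mathcal{F}v_i$, $u_j\mathcal{F}v_j$ share no internal vertex. For $j\in\mathcal{C}_M$, $P_j=\{(u,v)\in P:\mathrm{mcl}(u)=\mathrm{mcl}(v)=j\}$.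 *)

theory Defs
  imports Main
begin

definition simple_graph :: "'a set \<Rightarrow> 'a set set \<Rightarrow> bool" where
  "simple_graph V E \<longleftrightarrow> finite V \<and> (\<forall>e\<in>E. \<exists>a b. e = {a, b} \<and> a \<noteq> b \<and> a \<in> V \<and> b \<in> V)"

definition perfect_matching :: "'a set \<Rightarrow> 'a set set \<Rightarrow> 'a set set \<Rightarrow> bool" where
  "perfect_matching V E M \<longleftrightarrow> M \<subseteq> E \<and> (\<forall>v\<in>V. \<exists>!e. e \<in> M \<and> v \<in> e)"

definition edge_2_colouring :: "'a set \<Rightarrow> 'a set set \<Rightarrow> ('a set \<Rightarrow> nat) \<Rightarrow> bool" where
  "edge_2_colouring V E col \<longleftrightarrow> (\<forall>v\<in>V. card (col ` {e\<in>E. v \<in> e}) \<le> 2)"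

definition optimal_2_colouring :: "'a set \<Rightarrow> 'a set set \<Rightarrow> ('a set \<Rightarrow> nat) \<Rightarrow> bool" where
  "optimal_2_colouring V E col \<longleftrightarrow> edge_2_colouring V E col \<and>
     (\<forall>col'. edge_2_colouring V E col' \<longrightarrow> card (col' ` E) \<le> card (col ` E))"

definition mcl :: "'a set set \<Rightarrow> ('a set \<Rightarrow> nat) \<Rightarrow> 'a \<Rightarrow> nat" where
  "mcl M col u = col (THE e. e \<in> M \<and> u \<in> e)"

definition matching_colours :: "'a set set \<Rightarrow> ('a set \<Rightarrow> nat) \<Rightarrow> nat set" where
  "matching_colours M col = col ` M"

definition nonmatching_colours :: "'a set set \<Rightarrow> 'a set set \<Rightarrow> ('a set \<Rightarrow> nat) \<Rightarrow> nat set" where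
  "nonmatching_colours E M col = col ` E - col ` M"

definition colour_verts :: "'a set set \<Rightarrow> ('a set \<Rightarrow> nat) \<Rightarrow> nat \<Rightarrow> 'a set" where
  "colour_verts E col i = \<Union>{e\<in>E. col e = i}"

definition adj :: "'a set set \<Rightarrow> 'a \<Rightarrow> 'a \<Rightarrow> bool" where
  "adj E x y \<longleftrightarrow> {x, y} \<in> E"

definition component_of :: "'a set \<Rightarrow> 'a set set \<Rightarrow> 'a \<Rightarrow> 'a set" where
  "component_of V E v = {w\<in>V. (adj E)\<^sup>*\<^sup>* v w}"

definition components :: "'a set \<Rightarrow> 'a set set \<Rightarrow> 'a set set" where
  "components V E = component_of V E ` V"

text \<open>k_m for a component C of G minus M: the number of non-matching colour
  components G[i] (i a non-matching colour) contained in C.\<close>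
definition k_count :: "'a set set \<Rightarrow> 'a set set \<Rightarrow> ('a set \<Rightarrow> nat) \<Rightarrow> 'a set \<Rightarrow> nat" where
  "k_count E M col C = card {i \<in> nonmatching_colours E M col. colour_verts E col i \<subseteq> C}"

record 'a rforest =
  fverts :: "'a set"
  fedges :: "'a set set"
  froots :: "'a set"
  fdfs :: "'a \<Rightarrow> nat"

definition fpath :: "'a rforest \<Rightarrow> 'a \<Rightarrow> 'a \<Rightarrow> 'a list \<Rightarrow> bool" where
  "fpath F x y p \<longleftrightarrow> p \<noteq> [] \<and> hd p = x \<and> last p = y \<and> distinct p \<and> set p \<subseteq> fverts F \<and>
     (\<forall>k. Suc k < length p \<longrightarrow> {p ! k, p ! Suc k} \<in> fedges F)"

definition internal :: "'a list \<Rightarrow> 'a set" where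
  "internal p = set (butlast (tl p))"

definition trees :: "'a rforest \<Rightarrow> 'a set set" where
  "trees F = components (fverts F) (fedges F)"

definition tree_of :: "'a rforest \<Rightarrow> 'a \<Rightarrow> 'a set" where
  "tree_of F x = component_of (fverts F) (fedges F) x"

definition desc :: "'a rforest \<Rightarrow> 'a \<Rightarrow> 'a set" where
  "desc F u = {w. \<exists>r p. r \<in> froots F \<and> fpath F r w p \<and> u \<in> set p}"

definition leaves :: "'a rforest \<Rightarrow> 'a set" where
  "leaves F = {x \<in> fverts F - froots F. desc F x = {x}}"

text \<open>Well-formed rooted forest with a depth-first (preorder) indexing of each tree:
  acyclic simple graph, exactly one root in every tree, the index is injective on
  every tree and the descendants of every vertex u form the block of consecutive
  indices starting at the index of u.\<close>
definition rooted_forest :: "'a rforest \<Rightarrow> bool" where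
  "rooted_forest F \<longleftrightarrow>
     simple_graph (fverts F) (fedges F) \<and>
     (\<forall>x y p q. fpath F x y p \<longrightarrow> fpath F x y q \<longrightarrow> p = q) \<and>
     froots F \<subseteq> fverts F \<and>
     (\<forall>T\<in>trees F. \<exists>!r. r \<in> froots F \<and> r \<in> T) \<and>
     (\<forall>T\<in>trees F. inj_on (fdfs F) T) \<and>
     (\<forall>u\<in>fverts F. desc F u =
        {w\<in>tree_of F u. fdfs F u \<le> fdfs F w \<and> fdfs F w < fdfs F u + card (desc F u)})"

definition forest_le :: "'a rforest \<Rightarrow> 'a \<Rightarrow> 'a \<Rightarrow> bool" where
  "forest_le F u v \<longleftrightarrow> u \<in> fverts F \<and> v \<in> tree_of F u \<and> fdfs F v \<le> fdfs F u"

definition cascading_pair :: "'a rforest \<Rightarrow> 'a set \<Rightarrow> 'a rforest \<Rightarrow> 'a set \<Rightarrow> bool" where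
  "cascading_pair F1 T1 F2 T2 \<longleftrightarrow> T1 \<inter> T2 = {} \<or>
     ((\<exists>r. r \<in> froots F2 \<and> r \<in> T2 \<and> r \<in> leaves F1 \<and> r \<in> T1) \<and> card (T1 \<inter> T2) = 1)"

definition cascading_seq :: "'a rforest list \<Rightarrow> bool" where
  "cascading_seq Fs \<longleftrightarrow> (\<forall>F\<in>set Fs. rooted_forest F) \<and>
     (\<forall>i j. i < length Fs \<longrightarrow> j < length Fs \<longrightarrow> i + 2 \<le> j \<longrightarrow> fverts (Fs ! i) \<inter> fverts (Fs ! j) = {}) \<and>
     (\<forall>i. Suc i < length Fs \<longrightarrow>
        (\<forall>T1\<in>trees (Fs ! i). \<forall>T2\<in>trees (Fs ! Suc i). cascading_pair (Fs ! i) T1 (Fs ! Suc i) T2))"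

definition seq_verts :: "'a rforest list \<Rightarrow> 'a set" where
  "seq_verts Fs = (\<Union>F\<in>set Fs. fverts F)"

definition seq_int :: "'a rforest list \<Rightarrow> 'a set" where
  "seq_int Fs = {x \<in> seq_verts Fs. \<forall>F\<in>set Fs. x \<in> fverts F \<longrightarrow> x \<notin> froots F \<and> x \<notin> leaves F}"

definition seq_le :: "'a rforest list \<Rightarrow> 'a \<Rightarrow> 'a \<Rightarrow> bool" where
  "seq_le Fs = (\<lambda>x y. \<exists>F\<in>set Fs. forest_le F x y)\<^sup>+\<^sup>+"

definition seq_less :: "'a rforest list \<Rightarrow> 'a \<Rightarrow> 'a \<Rightarrow> bool" where
  "seq_less Fs x y \<longleftrightarrow> seq_le Fs x y \<and> x \<noteq> y"

definition monochromatic :: "('a set \<Rightarrow> nat) \<Rightarrow> nat \<Rightarrow> 'a list \<Rightarrow> bool" where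
  "monochromatic col c p \<longleftrightarrow> (\<forall>k. Suc k < length p \<longrightarrow> col {p ! k, p ! Suc k} = c)"

definition standing_forests ::
  "'a set \<Rightarrow> 'a set set \<Rightarrow> 'a set set \<Rightarrow> ('a set \<Rightarrow> nat) \<Rightarrow> 'a rforest list \<Rightarrow> bool" where
  "standing_forests V E M col Fs \<longleftrightarrow>
     cascading_seq Fs \<and>
     (\<forall>F\<in>set Fs. fverts F \<subseteq> V \<and> fedges F \<subseteq> E - M) \<and>
     int (\<Sum>F\<leftarrow>Fs. card (leaves F)) =
       (\<Sum>C\<in>components V (E - M). int (k_count E M col C) - 1) \<and>
     (\<forall>i\<in>nonmatching_colours E M col. seq_int Fs \<inter> colour_verts E col i = {}) \<and>
     (\<forall>F\<in>set Fs. \<forall>u\<in>froots F \<union> leaves F. \<forall>e\<in>fedges F. u \<in> e \<longrightarrow> col e = mcl M col u)"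

definition standing_pairs ::
  "'a set \<Rightarrow> 'a set set \<Rightarrow> 'a set set \<Rightarrow> ('a set \<Rightarrow> nat) \<Rightarrow> 'a rforest list \<Rightarrow> ('a \<times> 'a) set \<Rightarrow> bool" where
  "standing_pairs V E M col Fs P \<longleftrightarrow>
     P \<subseteq> seq_verts Fs \<times> seq_verts Fs \<and>
     int (card P) = (\<Sum>C\<in>components V (E - M). int (k_count E M col C) - 1) \<and>
     inj_on fst P \<and>
     (\<forall>(u, v)\<in>P. seq_less Fs u v \<and> (\<exists>F\<in>set Fs. \<exists>p. fpath F u v p)) \<and>
     (\<forall>(u, v)\<in>P. mcl M col u = mcl M col v) \<and>
     (\<forall>(u, v)\<in>P. \<forall>F\<in>set Fs. \<forall>p. fpath F u v p \<longrightarrow> monochromatic col (mcl M col u) p) \<and>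
     (\<forall>(u, v)\<in>P. \<forall>F\<in>set Fs. \<forall>p. fpath F u v p \<longrightarrow>
        (\<forall>z\<in>internal p. mcl M col z \<noteq> mcl M col u)) \<and>
     (\<forall>(u, v)\<in>P. \<forall>(u', v')\<in>P. (u, v) \<noteq> (u', v') \<longrightarrow> {u, v} \<in> M \<longrightarrow> {u', v'} \<in> M \<longrightarrow>
        (\<forall>F\<in>set Fs. \<forall>F'\<in>set Fs. \<forall>p q. fpath F u v p \<longrightarrow> fpath F' u' v' q \<longrightarrow>
           internal p \<inter> internal q = {}))"

definition P_col :: "'a set set \<Rightarrow> ('a set \<Rightarrow> nat) \<Rightarrow> ('a \<times> 'a) set \<Rightarrow> nat \<Rightarrow> ('a \<times> 'a) set" where
  "P_col M col P j = {(u, v)\<in>P. mcl M col u = j \<and> mcl M col v = j}"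

end

theory Submission
  imports Defs
begin

text \<open>A vertex x shared by the interiors of the two paths would see three distinct colours:
  the colour i of the first path, the colour j of the second, and its own matching colour
  mcl x, which differs from i and j by condition (e) on the pairs.  This contradicts the
  edge 2-colouring at x.\<close>

lemma internal_conv_nth:
  assumes "x \<in> internal p"
  obtains k where "Suc (Suc k) < length p" "x = p ! Suc k"
proof -
  from assms obtain k where k: "k < length (butlast (tl p))" "x = butlast (tl p) ! k"
    unfolding internal_def by (auto simp: in_set_conv_nth)
  then have "Suc (Suc k) < length p"
    by simp
  moreover have "x = p ! Suc k"
    using k by (simp add: nth_butlast nth_tl)
  ultimately show thesis
    by (rule that)
qed

lemma internal_subset_set: "internal p \<subseteq> set p"
  unfolding internal_def by (cases p) (auto dest: in_set_butlastD)

lemma fpath_internal_in_fverts: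
  assumes "fpath F a b p" "x \<in> internal p"
  shows "x \<in> fverts F"
proof -
  have "set p \<subseteq> fverts F"
    using assms(1) by (simp add: fpath_def)
  then show ?thesis
    using assms(2) internal_subset_set[of p] by auto
qed

lemma monochromatic_fpath_internal_edge:
  assumes "fpath F a b p" "monochromatic col c p" "x \<in> internal p"
  obtains e where "e \<in> fedges F" "x \<in> e" "col e = c"
proof -
  obtain k where k: "Suc (Suc k) < length p" "x = p ! Suc k"
    using internal_conv_nth[OF assms(3)] .
  show thesis
  proof (rule that)
    show "{p ! k, p ! Suc k} \<in> fedges F"
      using assms(1) k(1) unfolding fpath_def by simp
    show "col {p ! k, p ! Suc k} = c"
      using assms(2) k(1) unfolding monochromatic_def by simp
  qed (simp add: k(2))
qed

lemma simple_graph_finite_edges: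
  assumes "simple_graph V E"
  shows "finite E"
proof (rule finite_subset)
  show "E \<subseteq> Pow V"
    using assms unfolding simple_graph_def by fastforce
  show "finite (Pow V)"
    using assms unfolding simple_graph_def by simp
qed

lemma perfect_matching_mcl_edge:
  assumes "perfect_matching V E M" "x \<in> V"
  obtains e where "e \<in> E" "x \<in> e" "col e = mcl M col x"
proof -
  have M: "M \<subseteq> E" and unique: "\<exists>!e. e \<in> M \<and> x \<in> e"
    using assms unfolding perfect_matching_def by auto
  then obtain e where e: "e \<in> M" "x \<in> e"
    by blast
  have "(THE e. e \<in> M \<and> x \<in> e) = e"
    using unique e by (intro the1_equality) auto
  then show thesis
    using that e M unfolding mcl_def by auto
qed

lemma edge_2_colouring_no_three_colours:
  assumes "edge_2_colouring V E col" "finite E" "x \<in> V"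
    and "e1 \<in> E" "e2 \<in> E" "e3 \<in> E" "x \<in> e1" "x \<in> e2" "x \<in> e3"
    and "col e1 \<noteq> col e2" "col e1 \<noteq> col e3" "col e2 \<noteq> col e3"
  shows False
proof -
  have "{col e1, col e2, col e3} \<subseteq> col ` {e \<in> E. x \<in> e}"
    using assms(4-9) by auto
  then have "card {col e1, col e2, col e3} \<le> card (col ` {e \<in> E. x \<in> e})"
    using assms(2) by (intro card_mono) simp_all
  moreover have "card (col ` {e \<in> E. x \<in> e}) \<le> 2"
    using assms(1,3) unfolding edge_2_colouring_def by blast
  ultimately show False
    using assms(10-12) by simp
qed

lemma standing_pairs_fpath:
  assumes "standing_pairs V E M col Fs P" "(u, v) \<in> P" "F \<in> set Fs" "fpath F u v p"
  shows "monochromatic col (mcl M col u) p"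
    and "\<forall>z\<in>internal p. mcl M col z \<noteq> mcl M col u"
proof -
  have "\<forall>(u, v)\<in>P. \<forall>F\<in>set Fs. \<forall>p. fpath F u v p \<longrightarrow>
      monochromatic col (mcl M col u) p"
    using assms(1) unfolding standing_pairs_def by (elim conjE) assumption
  moreover have "\<forall>(u, v)\<in>P. \<forall>F\<in>set Fs. \<forall>p. fpath F u v p \<longrightarrow>
      (\<forall>z\<in>internal p. mcl M col z \<noteq> mcl M col u)"
    using assms(1) unfolding standing_pairs_def by (elim conjE) assumption
  ultimately show "monochromatic col (mcl M col u) p"
    and "\<forall>z\<in>internal p. mcl M col z \<noteq> mcl M col u"
    using assms(2-4) by (fastforce dest: bspec)+
qed

lemma standing_forests_subgraph:
  assumes "standing_forests V E M col Fs" "F \<in> set Fs"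
  shows "fverts F \<subseteq> V" and "fedges F \<subseteq> E"
  using assms unfolding standing_forests_def by blast+

theorem lemma10:
  fixes V :: "'a set" and E M :: "'a set set" and col :: "'a set \<Rightarrow> nat"
    and Fs :: "'a rforest list" and P :: "('a \<times> 'a) set"
  assumes "simple_graph V E"
    and "perfect_matching V E M"
    and "optimal_2_colouring V E col"
    and "standing_forests V E M col Fs"
    and "standing_pairs V E M col Fs P"
    and "i \<in> matching_colours M col" and "j \<in> matching_colours M col" and "i \<noteq> j"
    and "(u, v) \<in> P_col M col P i" and "(z, w) \<in> P_col M col P j"
    and "F \<in> set Fs" and "F' \<in> set Fs"
    and "fpath F u v p" and "fpath F' z w q"
  shows "internal p \<inter> internal q = {}"
proof (rule ccontr)
  assume "internal p \<inter> internal q \<noteq> {}"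
  then obtain x where xp: "x \<in> internal p" and xq: "x \<in> internal q" by blast
  have uv: "(u, v) \<in> P" "mcl M col u = i" and zw: "(z, w) \<in> P" "mcl M col z = j"
    using assms(9,10) unfolding P_col_def by auto
  note path_p = standing_pairs_fpath[OF assms(5) uv(1) assms(11,13), unfolded uv(2)]
  note path_q = standing_pairs_fpath[OF assms(5) zw(1) assms(12,14), unfolded zw(2)]
  note F = standing_forests_subgraph[OF assms(4,11)]
    and F' = standing_forests_subgraph[OF assms(4,12)]
  have xV: "x \<in> V"
    using fpath_internal_in_fverts[OF assms(13) xp] F(1) by auto
  obtain e1 where e1: "e1 \<in> E" "x \<in> e1" "col e1 = i"
    using monochromatic_fpath_internal_edge[OF assms(13) path_p(1) xp] F(2) by blast
  obtain e2 where e2: "e2 \<in> E" "x \<in> e2" "col e2 = j"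
    using monochromatic_fpath_internal_edge[OF assms(14) path_q(1) xq] F'(2) by blast
  obtain e3 where e3: "e3 \<in> E" "x \<in> e3" "col e3 = mcl M col x"
    using perfect_matching_mcl_edge[OF assms(2) xV] by blast
  have colouring: "edge_2_colouring V E col"
    using assms(3) unfolding optimal_2_colouring_def by blast
  have distinct: "col e1 \<noteq> col e2" "col e1 \<noteq> col e3" "col e2 \<noteq> col e3"
    using e1(3) e2(3) e3(3) assms(8) path_p(2) path_q(2) xp xq by auto
  show False
    using colouring simple_graph_finite_edges[OF assms(1)] xV e1(1) e2(1) e3(1) e1(2) e2(2) e3(2)
      distinct
    by (rule edge_2_colouring_no_three_colours)
qed

end
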